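(* Let $d\in T^{W_P}$, $q=\alpha_1(d)$, and $z\in Z_d$ with $z=u_1\dot w_Pd\bar u_2$, $u_1\in U_+\cap\dot w_PU_+\dot w_P^{-1}$, $\bar u_2\in U_-$, where $\bar u_2=y_1(a_1)\cdots y_{m-1}(a_{m-1})y_m(c)y_{m-1}(b_{m-1})\cdots y_1(b_1)$ with all $a_i,c,b_i\neq0$. Then $$\mathcal F_d(\pi_R(z))=a_1+\dots+a_{m-1}+c+b_{m-1}+\dots+b_1+q\,\frac{a_1+b_1}{a_1\cdots a_{m-1}\,c\,b_{m-1}\cdots b_1}.$$
   Context: Fix an integer $m\ge 2$. Let $V=\mathbb C^{2m}$ and let $J$ be the $2m\times 2m$ matrix with $J_{i,2m+1-i}=(-1)^i$ for $1\le i\le 2m$ and all other entries $0$. Let $G=\mathrm{PSp}(V,J)\cong\mathrm{PSp}_{2m}(\mathbb C)$, whose elements are represented by matrices. Let $E_{i,j}$ denote matrix units, $e_i=E_{i,i+1}+E_{2m-i,2m-i+1}$ for $1\le i\le m-1$, $e_m=E_{m,m+1}$, $f_i=e_i^{T}$, $x_i(a)=\exp(ae_i)$, $y_i(a)=\exp(af_i)$. Let $B_+=TU_+$ and $B_-=TU_-$ be the upper resp. lower triangular elements of $G$, with $U_\pm$ their unipotent radicals and $T$ the diagonal elements $(d_{ij})$ with $d_{ii}=d_{2m+1-i,2m+1-i}^{-1}$. The Weyl group $W$ is generated by $s_1,\dots,s_m$ with representatives $\dot s_i=y_i(-1)x_i(1)y_i(-1)$; for $w=s_{i_1}\cdots s_{i_k}$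 reduced, $\dot w=\dot s_{i_1}\cdots\dot s_{i_k}$. Let $W_P=\langle s_2,\dots,s_m\rangle$, $w_P$ its longest element, $w_0$ the longest element of $W$. Let $T^{W_P}$ be the $W_P$-fixed part of $T$, and $\alpha_1(d)=d_{11}/d_{22}$. For $d\in T^{W_P}$ let $Z_d=B_-\dot w_0\cap U_+d\dot w_PU_-$. The open Richardson variety is $\mathcal R=(B_+\dot w_PB_-\cap B_-\dot w_0B_-)/B_-\subset G/B_-$, and $\pi_R:Z_d\to\mathcal R$, $z\mapsto zB_-$, is an isomorphism. Each $z\in Z_d$ is written uniquely as $z=u_1\dot w_Pd\bar u_2$ with $u_1\in U_+\cap\dot w_PU_+\dot w_P^{-1}$ and $\bar u_2\in U_-$. For $u\in U_+$ put $e_i^*(u)=u_{i,i+1}$, and for $\bar u\in U_-$ put $f_i^*(\bar u)=\bar u_{i+1,i}$. The superpotential is $\mathcal F_d(\pi_R(z))=\sum_{i=1}^m e_i^*(u_1)+\sum_{i=1}^m f_i^*(\bar u_2)$. *)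

theory Defs
  imports Complex_Main "Jordan_Normal_Form.Matrix"
begin

(* All matrices are 2m x 2m complex matrices (Jordan_Normal_Form 'complex mat').
   Paper indices are 1-based; ent A i j is the paper's entry A_{i,j}. *)

definition ent :: "complex mat \<Rightarrow> nat \<Rightarrow> nat \<Rightarrow> complex" where
  "ent A i j = A $$ (i - 1, j - 1)"

definition Eunit :: "nat \<Rightarrow> nat \<Rightarrow> nat \<Rightarrow> complex mat" where
  "Eunit m i j = mat (2*m) (2*m) (\<lambda>(a,b). if a + 1 = i \<and> b + 1 = j then 1 else 0)"

definition Jmat :: "nat \<Rightarrow> complex mat" where
  "Jmat m = mat (2*m) (2*m) (\<lambda>(a,b). if a + 1 + (b + 1) = 2*m + 1 then (-1) ^ (a + 1) else 0)"

definition Sp :: "nat \<Rightarrow> complex mat set" where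
  "Sp m = {g \<in> carrier_mat (2*m) (2*m). transpose_mat g * Jmat m * g = Jmat m}"

(* PSp = Sp / {+1,-1}: two representatives define the same element of G iff they agree up to sign *)
definition peq :: "complex mat \<Rightarrow> complex mat \<Rightarrow> bool" where
  "peq A B \<longleftrightarrow> A = B \<or> A = - B"

definition lower_triangular :: "complex mat \<Rightarrow> bool" where
  "lower_triangular A \<longleftrightarrow> upper_triangular (transpose_mat A)"

definition Bplus :: "nat \<Rightarrow> complex mat set" where
  "Bplus m = {b \<in> Sp m. upper_triangular b}"
definition Bminus :: "nat \<Rightarrow> complex mat set" where
  "Bminus m = {b \<in> Sp m. lower_triangular b}"
definition Uplus :: "nat \<Rightarrow> complex mat set" where
  "Uplus m = {u \<in> Bplus m. \<forall>i\<in>{1..2*m}. ent u i i = 1}"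
definition Uminus :: "nat \<Rightarrow> complex mat set" where
  "Uminus m = {u \<in> Bminus m. \<forall>i\<in>{1..2*m}. ent u i i = 1}"

definition Torus :: "nat \<Rightarrow> complex mat set" where
  "Torus m = {d \<in> Sp m. diagonal_mat d \<and>
      (\<forall>i\<in>{1..2*m}. ent d i i = inverse (ent d (2*m+1-i) (2*m+1-i)))}"

definition e_gen :: "nat \<Rightarrow> nat \<Rightarrow> complex mat" where
  "e_gen m i = (if i = m then Eunit m m (m+1)
                else Eunit m i (i+1) + Eunit m (2*m-i) (2*m-i+1))"
definition f_gen :: "nat \<Rightarrow> nat \<Rightarrow> complex mat" where
  "f_gen m i = transpose_mat (e_gen m i)"

(* matrix exponential of a nilpotent n x n matrix: exp A = sum_{k=0}^{n} A^k / k!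
   (exact, since A^n = 0 for nilpotent A); all arguments used below are nilpotent *)
definition nilexp :: "complex mat \<Rightarrow> complex mat" where
  "nilexp A = foldr (\<lambda>k S. (1 / of_nat (fact k)) \<cdot>\<^sub>m (A ^\<^sub>m k) + S)
                    [0..<dim_row A + 1] (0\<^sub>m (dim_row A) (dim_row A))"

definition x_el :: "nat \<Rightarrow> nat \<Rightarrow> complex \<Rightarrow> complex mat" where
  "x_el m i a = nilexp (a \<cdot>\<^sub>m e_gen m i)"
definition y_el :: "nat \<Rightarrow> nat \<Rightarrow> complex \<Rightarrow> complex mat" where
  "y_el m i a = nilexp (a \<cdot>\<^sub>m f_gen m i)"

definition sdot :: "nat \<Rightarrow> nat \<Rightarrow> complex mat" where
  "sdot m i = y_el m i (-1) * x_el m i 1 * y_el m i (-1)"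

definition wdot :: "nat \<Rightarrow> nat list \<Rightarrow> complex mat" where
  "wdot m ws = foldr (\<lambda>i M. sdot m i * M) ws (1\<^sub>m (2*m))"

(* Reduced words: in type C_m the longest element is c^m for the Coxeter element
   c = s_1 s_2 ... s_m (length m^2); W_P = <s_2,...,s_m> is of type C_{m-1}, with
   longest element (s_2 ... s_m)^(m-1). *)
definition w0_word :: "nat \<Rightarrow> nat list" where
  "w0_word m = concat (replicate m [1..<m+1])"
definition wP_word :: "nat \<Rightarrow> nat list" where
  "wP_word m = concat (replicate (m - 1) [2..<m+1])"

definition w0dot :: "nat \<Rightarrow> complex mat" where "w0dot m = wdot m (w0_word m)"
definition wPdot :: "nat \<Rightarrow> complex mat" where "wPdot m = wdot m (wP_word m)"

(* T^{W_P}: torus elements fixed (in G = PSp) by the generators s_2,...,s_m of W_P *)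
definition TWP :: "nat \<Rightarrow> complex mat set" where
  "TWP m = {d \<in> Torus m. \<forall>i\<in>{2..m}. peq (sdot m i * d) (d * sdot m i)}"

definition alpha1 :: "complex mat \<Rightarrow> complex" where
  "alpha1 d = ent d 1 1 / ent d 2 2"

(* Z_d = B_- \<dot>w_0 \<inter> U_+ d \<dot>w_P U_-  (as a subset of G = PSp, via representatives) *)
definition Zd :: "nat \<Rightarrow> complex mat \<Rightarrow> complex mat set" where
  "Zd m d = {z \<in> Sp m. (\<exists>b\<in>Bminus m. peq z (b * w0dot m)) \<and>
                       (\<exists>u\<in>Uplus m. \<exists>v\<in>Uminus m. peq z (u * d * wPdot m * v))}"

(* U_+ \<inter> \<dot>w_P U_+ \<dot>w_P^{-1} (in G) *)
definition Uplus_wP :: "nat \<Rightarrow> complex mat set" where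
  "Uplus_wP m = {u \<in> Uplus m. \<exists>u'\<in>Uplus m. peq (u * wPdot m) (wPdot m * u')}"

definition ubar_form :: "nat \<Rightarrow> (nat \<Rightarrow> complex) \<Rightarrow> complex \<Rightarrow> (nat \<Rightarrow> complex) \<Rightarrow> complex mat" where
  "ubar_form m a c b =
     foldr (\<lambda>i M. y_el m i (a i) * M) [1..<m]
       (y_el m m c * foldr (\<lambda>i M. M * y_el m i (b i)) [1..<m] (1\<^sub>m (2*m)))"

(* superpotential F_d(\<pi>_R(z)) = sum_i e_i^*(u_1) + sum_i f_i^*(ubar_2),
   where z = u_1 \<dot>w_P d ubar_2 is the unique decomposition of z \<in> Z_d *)
definition superpot :: "nat \<Rightarrow> complex mat \<Rightarrow> complex mat \<Rightarrow> complex" where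
  "superpot m u1 u2 = (\<Sum>i=1..m. ent u1 i (i+1)) + (\<Sum>i=1..m. ent u2 (i+1) i)"

end

theory Submission
  imports Defs
begin

text \<open>Write \<open>t = e_1^*(u_1)\<close> and \<open>P = a_1 \<cdots> a_(m-1) c b_(m-1) \<cdots> b_1\<close>. Since
  \<open>w_P\<^sup>-\<^sup>1 u_1 w_P\<close> is again upper unitriangular and \<open>w_P\<close> maps each index \<open>j \<in> {2, \<dots>, m + 1}\<close>
  to \<open>2m + 1 - j\<close>, the entries \<open>e_i^*(u_1)\<close>, \<open>i \<ge> 2\<close>, vanish, while the \<open>f_i^*(ubar_2)\<close>
  are the subdiagonal entries \<open>a_i + b_i\<close> and \<open>c\<close> of \<open>ubar_2\<close>. So
  \<open>F_d = t + \<Sum> a_i + c + \<Sum> b_i\<close>.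

  To find \<open>t\<close>, look at the entry \<open>(2m - 1, 1)\<close> of \<open>z\<close>. It vanishes because \<open>z \<in> B_- w_0\<close>
  and the first column of \<open>w_0\<close> is supported in row \<open>2m\<close>. Computed from
  \<open>z = u_1 w_P d ubar_2\<close> it is \<open>t d_(2m,2m) P - d_22 (a_1 + b_1)\<close>: symplecticity of \<open>u_1\<close> gives
  \<open>(u_1)_(2m-1,2m) = t\<close>, row \<open>2m\<close> of \<open>w_P\<close> is the last unit row and row \<open>2m - 1\<close> is minus the
  second one, and the corner entry of \<open>ubar_2\<close> is \<open>P\<close>. Finally \<open>d_11 d_(2m,2m) = 1\<close> and
  \<open>d_22\<^sup>2 = d_(m,m) d_(m+1,m+1) = 1\<close> by \<open>W_P\<close>-invariance, so \<open>t = q (a_1 + b_1) / P\<close>.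

  Entries are indexed from \<open>1\<close> here and in the definitions, but from \<open>0\<close> (\<open>A $$ (i, j)\<close>) below.\<close>

declare upt_Suc[simp del]

section \<open>Entries of matrix products\<close>

lemma index_mult_mat_sum:
  assumes "A \<in> carrier_mat n n" "B \<in> carrier_mat n n" "i < n" "j < n"
  shows "(A * B) $$ (i, j) = (\<Sum>k<n. A $$ (i, k) * B $$ (k, j))"
  using assms by (simp add: scalar_prod_def lessThan_atLeast0)

lemma sum_lessThan_single:
  fixes f :: "nat \<Rightarrow> 'a :: comm_monoid_add"
  assumes "p < n" "\<And>k. k < n \<Longrightarrow> k \<noteq> p \<Longrightarrow> f k = 0"
  shows "(\<Sum>k<n. f k) = f p"
  using sum.mono_neutral_right[of "{..<n}" "{p}" f] assms by auto

lemma sum_lessThan_two: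
  fixes f :: "nat \<Rightarrow> 'a :: comm_monoid_add"
  assumes "p < n" "q < n" "p \<noteq> q" "\<And>k. k < n \<Longrightarrow> k \<noteq> p \<Longrightarrow> k \<noteq> q \<Longrightarrow> f k = 0"
  shows "(\<Sum>k<n. f k) = f p + f q"
  using sum.mono_neutral_right[of "{..<n}" "{p, q}" f] assms by auto

lemma index_mult_two_term_row:
  fixes A B :: "'a :: semiring_0 mat"
  assumes "A \<in> carrier_mat n n" "B \<in> carrier_mat n n" "i < n" "j < n" "p < n" "q < n"
    and "\<And>k. k < n \<Longrightarrow> A $$ (i, k) = (if k = p then \<alpha> else 0) + (if k = q then \<beta> else 0)"
  shows "(A * B) $$ (i, j) = \<alpha> * B $$ (p, j) + \<beta> * B $$ (q, j)"
proof -
  have "(A * B) $$ (i, j) =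
      (\<Sum>k<n. (if k = p then \<alpha> * B $$ (p, j) else 0) + (if k = q then \<beta> * B $$ (q, j) else 0))"
    unfolding index_mult_mat_sum[OF assms(1-4)] using assms(7) by (intro sum.cong) (auto simp: distrib_right)
  then show ?thesis using assms(5,6) by (simp add: sum.distrib)
qed

lemma index_mult_single_row:
  fixes A B :: "'a :: semiring_0 mat"
  assumes "A \<in> carrier_mat n n" "B \<in> carrier_mat n n" "i < n" "j < n" "p < n"
    and "\<And>k. k < n \<Longrightarrow> A $$ (i, k) = (if k = p then \<alpha> else 0)"
  shows "(A * B) $$ (i, j) = \<alpha> * B $$ (p, j)"
  using index_mult_two_term_row[OF assms(1-5,5), of \<alpha> 0] assms(6) by simp

lemma index_mult_single_col:
  fixes A B :: "'a :: semiring_0 mat"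
  assumes "A \<in> carrier_mat n n" "B \<in> carrier_mat n n" "i < n" "j < n" "p < n"
    and "\<And>k. k < n \<Longrightarrow> B $$ (k, j) = (if k = p then \<beta> else 0)"
  shows "(A * B) $$ (i, j) = A $$ (i, p) * \<beta>"
proof -
  have "(A * B) $$ (i, j) = (\<Sum>k<n. if k = p then A $$ (i, p) * \<beta> else 0)"
    unfolding index_mult_mat_sum[OF assms(1-4)] using assms(6) by (intro sum.cong) auto
  then show ?thesis using assms(5) by simp
qed

lemma peq_index_eq_zero:
  assumes "peq A B" "B \<in> carrier_mat n n" "i < n" "j < n" "B $$ (i, j) = 0"
  shows "A $$ (i, j) = 0"
  using assms unfolding peq_def by auto

lemma peq_sym: "peq A B \<Longrightarrow> peq B A"
  by (auto simp: peq_def)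

lemma peq_eq_of_index:
  fixes A B :: "complex mat"
  assumes "peq A B" "B \<in> carrier_mat n n" "i < n" "j < n" "A $$ (i, j) = B $$ (i, j)" "B $$ (i, j) \<noteq> 0"
  shows "A = B"
  using assms unfolding peq_def by auto

lemma diagonal_mat_col:
  assumes "A \<in> carrier_mat n n" "diagonal_mat A" "j < n" "k < n"
  shows "A $$ (k, j) = (if k = j then A $$ (j, j) else 0)"
  using assms unfolding diagonal_mat_def by auto

section \<open>Root subgroups and simple reflections\<close>

definition adjacent_pairs_disjoint :: "nat set \<Rightarrow> nat \<Rightarrow> bool" where
  "adjacent_pairs_disjoint P n \<longleftrightarrow> (\<forall>p\<in>P. p + 1 < n \<and> p + 1 \<notin> P)"

definition shift_mat :: "nat set \<Rightarrow> nat \<Rightarrow> complex mat" where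
  "shift_mat P n = mat n n (\<lambda>(r, c). if r \<in> P \<and> c = r + 1 then 1 else 0)"

definition swap_adjacent :: "nat set \<Rightarrow> nat \<Rightarrow> nat" where
  "swap_adjacent P j = (if j \<in> P then j + 1 else if 1 \<le> j \<and> j - 1 \<in> P then j - 1 else j)"

definition swap_sign :: "nat set \<Rightarrow> nat \<Rightarrow> complex" where
  "swap_sign P j = (if j \<notin> P \<and> 1 \<le> j \<and> j - 1 \<in> P then -1 else 1)"

lemma shift_mat_carrier [simp]: "shift_mat P n \<in> carrier_mat n n"
  by (simp add: shift_mat_def)

lemma dim_shift_mat [simp]: "dim_row (shift_mat P n) = n" "dim_col (shift_mat P n) = n"
  by (simp_all add: shift_mat_def)

lemma index_shift_mat [simp]:
  "r < n \<Longrightarrow> c < n \<Longrightarrow> shift_mat P n $$ (r, c) = (if r \<in> P \<and> c = r + 1 then 1 else 0)"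
  by (simp add: shift_mat_def)

lemma shift_mat_square_zero:
  assumes "adjacent_pairs_disjoint P n"
  shows "shift_mat P n * shift_mat P n = 0\<^sub>m n n"
proof (rule eq_matI)
  fix r c assume "r < dim_row (0\<^sub>m n n)" "c < dim_col (0\<^sub>m n n)"
  then have rc: "r < n" "c < n" by auto
  show "(shift_mat P n * shift_mat P n) $$ (r, c) = 0\<^sub>m n n $$ (r, c)"
    unfolding index_mult_mat_sum[OF shift_mat_carrier shift_mat_carrier rc]
    using assms rc by (auto intro!: sum.neutral simp: adjacent_pairs_disjoint_def)
qed auto

lemma swap_adjacent_less:
  "adjacent_pairs_disjoint P n \<Longrightarrow> j < n \<Longrightarrow> swap_adjacent P j < n"
  unfolding adjacent_pairs_disjoint_def swap_adjacent_def by auto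

lemma swap_adjacent_involution:
  "adjacent_pairs_disjoint P n \<Longrightarrow> j < n \<Longrightarrow> swap_adjacent P (swap_adjacent P j) = j"
  unfolding adjacent_pairs_disjoint_def swap_adjacent_def by auto

lemma y_x_product_row:
  fixes P n
  defines "E \<equiv> shift_mat P n"
  assumes "adjacent_pairs_disjoint P n" "j < n" "c < n"
  shows "((1\<^sub>m n - transpose_mat E) * (1\<^sub>m n + E)) $$ (j, c) =
    (if j \<in> P then (if c = j then 1 else 0) + (if c = j + 1 then 1 else 0)
     else if 1 \<le> j \<and> j - 1 \<in> P then (if c = j - 1 then -1 else 0)
     else (if c = j then 1 else 0))"
proof -
  let ?C = "1 \<le> j \<and> j - 1 \<in> P"
  have "((1\<^sub>m n - transpose_mat E) * (1\<^sub>m n + E)) $$ (j, c) =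
      1 * (1\<^sub>m n + E) $$ (j, c) + (if ?C then -1 else 0) * (1\<^sub>m n + E) $$ (j - 1, c)"
    by (rule index_mult_two_term_row) (use assms in \<open>auto simp: E_def\<close>)
  then show ?thesis using assms unfolding adjacent_pairs_disjoint_def E_def by auto
qed

lemma reflection_entry:
  fixes P n
  defines "E \<equiv> shift_mat P n"
  assumes P: "adjacent_pairs_disjoint P n" and jc: "j < n" "c < n"
  shows "((1\<^sub>m n - transpose_mat E) * (1\<^sub>m n + E) * (1\<^sub>m n - transpose_mat E)) $$ (j, c) =
    (if c = swap_adjacent P j then swap_sign P j else 0)"
proof -
  let ?Y = "1\<^sub>m n - transpose_mat E" and ?X = "1\<^sub>m n + E"
  have YX: "?Y * ?X \<in> carrier_mat n n" "?Y \<in> carrier_mat n n" by (auto simp: E_def)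
  note row = y_x_product_row[OF P jc(1), folded E_def]
  consider (up) "j \<in> P" | (down) "j \<notin> P" "1 \<le> j" "j - 1 \<in> P" | (fixed) "j \<notin> P" "\<not> (1 \<le> j \<and> j - 1 \<in> P)"
    by blast
  then show ?thesis
  proof cases
    case up
    have "(?Y * ?X * ?Y) $$ (j, c) = 1 * ?Y $$ (j, c) + 1 * ?Y $$ (j + 1, c)"
      by (rule index_mult_two_term_row[OF YX jc]) (use P up row in \<open>auto simp: adjacent_pairs_disjoint_def\<close>)
    then show ?thesis using P up jc unfolding adjacent_pairs_disjoint_def swap_adjacent_def swap_sign_def E_def
      by auto
  next
    case down
    have "(?Y * ?X * ?Y) $$ (j, c) = -1 * ?Y $$ (j - 1, c)"
      by (rule index_mult_single_row[OF YX jc]) (use down row jc in auto)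
    then show ?thesis using P down jc unfolding adjacent_pairs_disjoint_def swap_adjacent_def swap_sign_def E_def
      by auto
  next
    case fixed
    have "(?Y * ?X * ?Y) $$ (j, c) = 1 * ?Y $$ (j, c)"
      by (rule index_mult_single_row[OF YX jc jc(1)]) (use fixed row in auto)
    then show ?thesis using P fixed jc unfolding adjacent_pairs_disjoint_def swap_adjacent_def swap_sign_def E_def
      by auto
  qed
qed

lemma nilexp_square_zero:
  fixes A :: "complex mat"
  assumes A: "A \<in> carrier_mat n n" and sq: "A * A = 0\<^sub>m n n" and n: "1 \<le> n"
  shows "nilexp A = 1\<^sub>m n + A"
proof -
  have pow: "A ^\<^sub>m k = 0\<^sub>m n n" if "2 \<le> k" for k
    using that
  proof (induction k rule: dec_induct)
    case base then show ?case using A sq by (simp add: numeral_2_eq_2)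
  next
    case (step k) then show ?case using A by simp
  qed
  define f where "f = (\<lambda>k S. (1 / of_nat (fact k)) \<cdot>\<^sub>m (A ^\<^sub>m k) + (S :: complex mat))"
  have tail: "foldr f ks (0\<^sub>m n n) = 0\<^sub>m n n" if "\<forall>k\<in>set ks. 2 \<le> k" for ks
    using that by (induction ks) (auto simp: f_def pow)
  have split: "[0..<n + 1] = [0, 1] @ [2..<n + 1]" using n by (simp add: upt_conv_Cons numeral_2_eq_2)
  have "nilexp A = foldr f [0..<n + 1] (0\<^sub>m n n)" using A unfolding nilexp_def f_def by simp
  also have "\<dots> = f 0 (f 1 (0\<^sub>m n n))" using tail[of "[2..<n + 1]"] by (simp only: split foldr_append) simp
  also have "\<dots> = 1\<^sub>m n + A" using A unfolding f_def by (intro eq_matI) auto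
  finally show ?thesis .
qed

text \<open>The 0-based rows in which \<open>e_i\<close> has its nonzero entries.\<close>

definition gen_rows :: "nat \<Rightarrow> nat \<Rightarrow> nat set" where
  "gen_rows m i = (if i = m then {m - 1} else {i - 1, 2*m - 1 - i})"

lemma gen_rows_disjoint:
  assumes "2 \<le> m" "1 \<le> i" "i \<le> m"
  shows "adjacent_pairs_disjoint (gen_rows m i) (2*m)"
proof (cases "i = m")
  case True then show ?thesis using assms by (simp add: adjacent_pairs_disjoint_def gen_rows_def)
next
  case False
  have "i \<noteq> 2*m - 1 - i" "2*m - 1 - i + 1 \<noteq> i - 1" using assms False by presburger+
  then show ?thesis using assms False by (auto simp: adjacent_pairs_disjoint_def gen_rows_def)
qed

lemma e_gen_eq_shift_mat:
  assumes "2 \<le> m" "1 \<le> i" "i \<le> m"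
  shows "e_gen m i = shift_mat (gen_rows m i) (2*m)"
proof (rule eq_matI)
  fix r c assume "r < dim_row (shift_mat (gen_rows m i) (2*m))" "c < dim_col (shift_mat (gen_rows m i) (2*m))"
  then have rc: "r < 2*m" "c < 2*m" by auto
  show "e_gen m i $$ (r, c) = shift_mat (gen_rows m i) (2*m) $$ (r, c)"
  proof (cases "i = m")
    case True
    have "(r + 1 = m \<and> c + 1 = m + 1) \<longleftrightarrow> (r = m - 1 \<and> c = r + 1)" using assms by arith
    then show ?thesis using True rc unfolding e_gen_def Eunit_def gen_rows_def by simp
  next
    case False
    have "(r + 1 = i \<and> c + 1 = i + 1) \<longleftrightarrow> (r = i - 1 \<and> c = r + 1)"
      "(r + 1 = 2*m - i \<and> c + 1 = 2*m - i + 1) \<longleftrightarrow> (r = 2*m - 1 - i \<and> c = r + 1)"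
      "\<not> (r = i - 1 \<and> r = 2*m - 1 - i)"
      using assms False by presburger+
    then show ?thesis using False rc unfolding e_gen_def Eunit_def gen_rows_def by auto
  qed
qed (simp_all add: e_gen_def Eunit_def)

lemma smult_square_zero:
  fixes A :: "'a :: comm_ring mat"
  assumes "A \<in> carrier_mat n n" "A * A = 0\<^sub>m n n"
  shows "(t \<cdot>\<^sub>m A) * (t \<cdot>\<^sub>m A) = 0\<^sub>m n n"
  using assms by (simp add: mult_smult_assoc_mat[of _ n n] mult_smult_distrib[of _ n n])

lemma x_el_eq:
  assumes "2 \<le> m" "1 \<le> i" "i \<le> m"
  shows "x_el m i t = 1\<^sub>m (2*m) + t \<cdot>\<^sub>m shift_mat (gen_rows m i) (2*m)"
proof -
  let ?E = "shift_mat (gen_rows m i) (2*m)"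
  have "(t \<cdot>\<^sub>m ?E) * (t \<cdot>\<^sub>m ?E) = 0\<^sub>m (2*m) (2*m)"
    by (rule smult_square_zero[OF _ shift_mat_square_zero[OF gen_rows_disjoint[OF assms]]]) simp
  then show ?thesis
    unfolding x_el_def e_gen_eq_shift_mat[OF assms] using assms by (intro nilexp_square_zero) auto
qed

lemma y_el_eq:
  assumes "2 \<le> m" "1 \<le> i" "i \<le> m"
  shows "y_el m i t = 1\<^sub>m (2*m) + t \<cdot>\<^sub>m transpose_mat (shift_mat (gen_rows m i) (2*m))"
proof -
  let ?F = "transpose_mat (shift_mat (gen_rows m i) (2*m))"
  have "?F * ?F = transpose_mat (shift_mat (gen_rows m i) (2*m) * shift_mat (gen_rows m i) (2*m))"
    by (rule transpose_mult[symmetric]) auto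
  also have "\<dots> = 0\<^sub>m (2*m) (2*m)"
    using shift_mat_square_zero[OF gen_rows_disjoint[OF assms]] by (intro eq_matI) auto
  finally have "(t \<cdot>\<^sub>m ?F) * (t \<cdot>\<^sub>m ?F) = 0\<^sub>m (2*m) (2*m)"
    by (intro smult_square_zero) auto
  then show ?thesis
    unfolding y_el_def f_gen_def e_gen_eq_shift_mat[OF assms] using assms by (intro nilexp_square_zero) auto
qed

lemma y_el_carrier:
  "2 \<le> m \<Longrightarrow> 1 \<le> i \<Longrightarrow> i \<le> m \<Longrightarrow> y_el m i t \<in> carrier_mat (2*m) (2*m)"
  by (simp add: y_el_eq)

lemma index_y_el:
  assumes "2 \<le> m" "1 \<le> i" "i \<le> m" "r < 2*m" "c < 2*m"
  shows "y_el m i t $$ (r, c) = (if r = c then 1 else 0) + (if c \<in> gen_rows m i \<and> r = c + 1 then t else 0)"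
  using assms by (simp add: y_el_eq)

lemma sdot_eq_reflection:
  assumes "2 \<le> m" "1 \<le> i" "i \<le> m"
  defines "E \<equiv> shift_mat (gen_rows m i) (2*m)"
  shows "sdot m i = (1\<^sub>m (2*m) - transpose_mat E) * (1\<^sub>m (2*m) + E) * (1\<^sub>m (2*m) - transpose_mat E)"
proof -
  have "y_el m i (-1) = 1\<^sub>m (2*m) - transpose_mat E"
    unfolding y_el_eq[OF assms(1-3)] E_def by (intro eq_matI) auto
  moreover have "x_el m i 1 = 1\<^sub>m (2*m) + E"
    unfolding x_el_eq[OF assms(1-3)] E_def by (intro eq_matI) auto
  ultimately show ?thesis unfolding sdot_def by simp
qed

lemma sdot_carrier:
  "2 \<le> m \<Longrightarrow> 1 \<le> i \<Longrightarrow> i \<le> m \<Longrightarrow> sdot m i \<in> carrier_mat (2*m) (2*m)"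
  unfolding sdot_eq_reflection by (intro mult_carrier_mat) auto

lemma index_sdot:
  assumes "2 \<le> m" "1 \<le> i" "i \<le> m" "j < 2*m" "c < 2*m"
  shows "sdot m i $$ (j, c) = (if c = swap_adjacent (gen_rows m i) j then swap_sign (gen_rows m i) j else 0)"
  unfolding sdot_eq_reflection[OF assms(1-3)]
  by (rule reflection_entry[OF gen_rows_disjoint[OF assms(1-3)] assms(4,5)])

section \<open>Weyl group representatives as signed permutation matrices\<close>

text \<open>Each \<open>sdot m i\<close>, hence each \<open>wdot m ws\<close>, is a signed permutation matrix. The row \<open>j\<close> of
  \<open>wdot m ws\<close> has its only nonzero entry \<open>s\<close> in column \<open>k\<close>, where \<open>(k, s) = track m ws (j, 1)\<close>.\<close>

definition track_step :: "nat \<Rightarrow> nat \<Rightarrow> nat \<times> complex \<Rightarrow> nat \<times> complex" where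
  "track_step m i x = (swap_adjacent (gen_rows m i) (fst x), snd x * swap_sign (gen_rows m i) (fst x))"

definition track :: "nat \<Rightarrow> nat list \<Rightarrow> nat \<times> complex \<Rightarrow> nat \<times> complex" where
  "track m ws = fold (track_step m) ws"

lemma track_Nil [simp]: "track m [] x = x"
  by (simp add: track_def)

lemma track_Cons [simp]: "track m (i # ws) x = track m ws (track_step m i x)"
  by (simp add: track_def)

lemma track_append: "track m (xs @ ys) x = track m ys (track m xs x)"
  by (simp add: track_def)

lemma track_concat_replicate: "track m (concat (replicate k ws)) x = (track m ws ^^ k) x"
  by (induction k arbitrary: x) (simp_all add: track_append funpow_Suc_right del: funpow.simps)

lemma track_scale: "track m ws (j, s) = (fst (track m ws (j, 1)), s * snd (track m ws (j, 1)))"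
proof (induction ws arbitrary: j s)
  case (Cons i ws)
  let ?j' = "swap_adjacent (gen_rows m i) j" and ?s' = "swap_sign (gen_rows m i) j"
  have "track m (i # ws) (j, s) = (fst (track m ws (?j', 1)), s * ?s' * snd (track m ws (?j', 1)))"
    using Cons[of ?j' "s * ?s'"] by (simp add: track_step_def)
  moreover have "track m (i # ws) (j, 1) = (fst (track m ws (?j', 1)), ?s' * snd (track m ws (?j', 1)))"
    using Cons[of ?j' ?s'] by (simp add: track_step_def)
  ultimately show ?case by simp
qed simp

lemma swap_sign_of_fixed: "swap_adjacent P j = j \<Longrightarrow> swap_sign P j = 1"
  by (auto simp: swap_adjacent_def swap_sign_def split: if_splits)

lemma track_fixed:
  "(\<forall>i\<in>set ws. swap_adjacent (gen_rows m i) j = j) \<Longrightarrow> track m ws (j, s) = (j, s)"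
  by (induction ws) (simp_all add: track_step_def swap_sign_of_fixed)

definition valid_word :: "nat \<Rightarrow> nat list \<Rightarrow> bool" where
  "valid_word m ws \<longleftrightarrow> (\<forall>i\<in>set ws. 1 \<le> i \<and> i \<le> m)"

lemma valid_word_wP: "valid_word m (wP_word m)"
  by (auto simp: valid_word_def wP_word_def)

lemma valid_word_w0: "valid_word m (w0_word m)"
  by (auto simp: valid_word_def w0_word_def)

lemma wdot_Cons: "wdot m (i # ws) = sdot m i * wdot m ws"
  by (simp add: wdot_def)

lemma wdot_carrier:
  assumes "2 \<le> m" "valid_word m ws"
  shows "wdot m ws \<in> carrier_mat (2*m) (2*m)"
  using assms(2)
proof (induction ws)
  case Nil then show ?case by (simp add: wdot_def)
next
  case (Cons i ws) then show ?case
    using sdot_carrier[OF assms(1)] by (auto simp: wdot_Cons valid_word_def intro!: mult_carrier_mat)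
qed

lemma index_wdot:
  assumes "2 \<le> m" "valid_word m ws" "j < 2*m" "c < 2*m"
  shows "wdot m ws $$ (j, c) = (if c = fst (track m ws (j, 1)) then snd (track m ws (j, 1)) else 0)"
  using assms(2,3)
proof (induction ws arbitrary: j)
  case Nil then show ?case using assms(4) by (simp add: wdot_def)
next
  case (Cons i ws)
  let ?P = "gen_rows m i"
  have i: "1 \<le> i" "i \<le> m" and ws: "valid_word m ws" using Cons.prems by (auto simp: valid_word_def)
  have j': "swap_adjacent ?P j < 2*m" using swap_adjacent_less gen_rows_disjoint[OF assms(1) i] Cons.prems by blast
  have "wdot m (i # ws) $$ (j, c) = swap_sign ?P j * wdot m ws $$ (swap_adjacent ?P j, c)"
    unfolding wdot_Cons
    by (rule index_mult_single_row[OF sdot_carrier[OF assms(1) i] wdot_carrier[OF assms(1) ws] Cons.prems(2) assms(4) j'])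
      (use index_sdot[OF assms(1) i Cons.prems(2)] in simp)
  also have "\<dots> = (if c = fst (track m (i # ws) (j, 1)) then snd (track m (i # ws) (j, 1)) else 0)"
    using Cons.IH[OF ws j'] track_scale[of m ws "swap_adjacent ?P j" "swap_sign ?P j"]
    by (simp add: track_step_def)
  finally show ?case .
qed

lemma wPdot_carrier: "2 \<le> m \<Longrightarrow> wPdot m \<in> carrier_mat (2*m) (2*m)"
  unfolding wPdot_def by (rule wdot_carrier[OF _ valid_word_wP])

lemma w0dot_carrier: "2 \<le> m \<Longrightarrow> w0dot m \<in> carrier_mat (2*m) (2*m)"
  unfolding w0dot_def by (rule wdot_carrier[OF _ valid_word_w0])

lemma track_injective:
  assumes "2 \<le> m" "valid_word m ws" "j < 2*m" "j' < 2*m"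
    and "fst (track m ws (j, 1)) = fst (track m ws (j', 1))"
  shows "j = j'"
  using assms(2-5)
proof (induction ws arbitrary: j j')
  case (Cons i ws)
  have i: "1 \<le> i" "i \<le> m" and ws: "valid_word m ws" using Cons.prems by (auto simp: valid_word_def)
  note P = gen_rows_disjoint[OF assms(1) i]
  have "fst (track m ws (swap_adjacent (gen_rows m i) j, 1)) = fst (track m ws (swap_adjacent (gen_rows m i) j', 1))"
    using Cons.prems(4) track_scale[of m ws _ "swap_sign (gen_rows m i) j"]
      track_scale[of m ws _ "swap_sign (gen_rows m i) j'"]
    by (simp add: track_step_def)
  then have "swap_adjacent (gen_rows m i) j = swap_adjacent (gen_rows m i) j'"
    using Cons.IH[OF ws] swap_adjacent_less[OF P] Cons.prems(2,3) by blast
  then show ?case using swap_adjacent_involution[OF P] Cons.prems(2,3) by metis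
qed simp

lemma track_sign_nonzero: "snd (track m ws (j, 1)) \<noteq> 0"
proof (induction ws arbitrary: j)
  case (Cons i ws)
  then show ?case
    using track_scale[of m ws "swap_adjacent (gen_rows m i) j" "swap_sign (gen_rows m i) j"]
    by (simp add: track_step_def swap_sign_def)
qed simp

lemma upt_Cons_Suc: "a \<le> m \<Longrightarrow> [a..<m + 1] = a # [a + 1..<m + 1]"
  by (simp add: upt_conv_Cons)

lemma upt_split: "i \<le> j \<Longrightarrow> j \<le> k \<Longrightarrow> [i..<k] = [i..<j] @ [j..<k]"
  using upt_add_eq_append[of i j "k - j"] by simp

lemma upt_single [simp]: "[m..<Suc m] = [m]"
  by (simp add: upt_conv_Cons)

lemma track_segment_below:
  assumes "2 \<le> m" "1 \<le> a" "a \<le> m"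
  shows "track m [a..<m + 1] (a - 1, s) = (m, s)"
  using assms(3,2)
proof (induction a rule: inc_induct)
  case base
  have "track_step m m (m - 1, s) = (m, s)"
    using assms(1) by (simp add: track_step_def swap_adjacent_def swap_sign_def gen_rows_def)
  then show ?case by simp
next
  case (step a)
  have "track_step m a (a - 1, s) = (a, s)"
    using step assms(1) by (auto simp: track_step_def swap_adjacent_def swap_sign_def gen_rows_def)
  then show ?case using step upt_Cons_Suc[of a m] by simp
qed

lemma track_segment_descend:
  assumes "2 \<le> m" "1 \<le> a" "a \<le> j" "j \<le> m - 1"
  shows "track m [a..<m + 1] (j, s) = (j - 1, - s)"
proof -
  have split: "[a..<m + 1] = [a..<j] @ j # [j + 1..<m + 1]"
    using assms upt_split[of a j "m + 1"] upt_Cons_Suc[of j m] by simp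
  have before: "track m [a..<j] (j, s) = (j, s)"
  proof (rule track_fixed, intro ballI)
    fix i assume "i \<in> set [a..<j]"
    then have "a \<le> i" "i < j" by auto
    moreover have "j \<noteq> 2*m - 1 - i" "j - 1 \<noteq> 2*m - 1 - i" using calculation assms by auto
    ultimately show "swap_adjacent (gen_rows m i) j = j"
      using assms by (auto simp: swap_adjacent_def gen_rows_def)
  qed
  have "j \<noteq> m" "j \<noteq> 2*m - 1 - j" using assms by presburger+
  then have at: "track_step m j (j, s) = (j - 1, - s)"
    using assms by (auto simp: track_step_def swap_adjacent_def swap_sign_def gen_rows_def)
  have after: "track m [j + 1..<m + 1] (j - 1, - s) = (j - 1, - s)"
    by (rule track_fixed) (use assms in \<open>auto simp: swap_adjacent_def gen_rows_def\<close>)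
  show ?thesis unfolding split track_append using before at after by simp
qed

lemma track_segment_ascend:
  assumes "2 \<le> m" "m \<le> j" "j \<le> 2*m - 3"
  shows "track m [2..<m + 1] (j, s) = (j + 1, s)"
proof -
  define i where "i = 2*m - 1 - j"
  have i: "2 \<le> i" "i \<le> m - 1" using assms by (auto simp: i_def)
  have split: "[2..<m + 1] = [2..<i] @ i # [i + 1..<m + 1]"
    using i upt_split[of 2 i "m + 1"] upt_Cons_Suc[of i m] by simp
  have before: "track m [2..<i] (j, s) = (j, s)"
    by (rule track_fixed) (use i assms in \<open>auto simp: swap_adjacent_def gen_rows_def i_def\<close>)
  have at: "track_step m i (j, s) = (j + 1, s)"
    using i assms by (auto simp: track_step_def swap_adjacent_def swap_sign_def gen_rows_def i_def)
  have after: "track m [i + 1..<m + 1] (j + 1, s) = (j + 1, s)"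
    by (rule track_fixed) (use i assms in \<open>auto simp: swap_adjacent_def gen_rows_def i_def\<close>)
  show ?thesis unfolding split track_append using before at after by simp
qed

lemma track_segment_mirror:
  assumes "2 \<le> m" "1 \<le> a" "a \<le> m"
  shows "track m [a..<m + 1] (2*m - a, s) = (m - 1, (-1) ^ (m + 1 - a) * s)"
  using assms(3,2)
proof (induction a arbitrary: s rule: inc_induct)
  case base
  have "track_step m m (2*m - m, s) = (m - 1, - s)"
    using assms(1) by (simp add: track_step_def swap_adjacent_def swap_sign_def gen_rows_def)
  then show ?case by simp
next
  case (step a)
  have "2*m - a \<noteq> a - 1" "2*m - a \<noteq> 2*m - 1 - a" using step assms by presburger+
  then have "track_step m a (2*m - a, s) = (2*m - Suc a, - s)"
    using step assms by (auto simp: track_step_def swap_adjacent_def swap_sign_def gen_rows_def)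
  moreover have "m + 1 - a = Suc (m + 1 - Suc a)" using step by simp
  ultimately show ?case using step upt_Cons_Suc[of a m] by simp
qed

lemma track_segment_iterate_descend:
  assumes "2 \<le> m" "1 \<le> a" "k + a \<le> j + 1" "j \<le> m - 1"
  shows "(track m [a..<m + 1] ^^ k) (j, s) = (j - k, (-1) ^ k * s)"
  using assms(3)
proof (induction k)
  case (Suc k)
  then have "(track m [a..<m + 1] ^^ k) (j, s) = (j - k, (-1) ^ k * s)" by simp
  moreover have "track m [a..<m + 1] (j - k, (-1) ^ k * s) = (j - k - 1, - ((-1) ^ k * s))"
    by (rule track_segment_descend) (use assms Suc in auto)
  ultimately show ?case by simp
qed simp

lemma track_segment_iterate_ascend:
  assumes "2 \<le> m" "k \<le> m - 2"
  shows "(track m [2..<m + 1] ^^ k) (m, s) = (m + k, s)"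
  using assms(2)
proof (induction k)
  case (Suc k)
  then have "(track m [2..<m + 1] ^^ k) (m, s) = (m + k, s)" by simp
  moreover have "track m [2..<m + 1] (m + k, s) = (m + k + 1, s)"
    by (rule track_segment_ascend) (use assms Suc in auto)
  ultimately show ?case by simp
qed simp

lemma track_wP_last:
  assumes "2 \<le> m"
  shows "track m (wP_word m) (2*m - 1, s) = (2*m - 1, s)"
  by (rule track_fixed) (use assms in \<open>auto simp: wP_word_def swap_adjacent_def gen_rows_def\<close>)

lemma track_wP_penultimate:
  assumes "2 \<le> m"
  shows "track m (wP_word m) (2*m - 2, 1) = (1, -1)"
proof -
  have "m - 1 = Suc (m - 2)" using assms by simp
  then have "track m (wP_word m) (2*m - 2, 1) =
      (track m [2..<m + 1] ^^ (m - 2)) (track m [2..<m + 1] (2*m - 2, 1))"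
    unfolding wP_word_def track_concat_replicate by (simp add: funpow_Suc_right del: funpow.simps)
  also have "track m [2..<m + 1] (2*m - 2, 1) = (m - 1, (-1) ^ (m - 1))"
    using track_segment_mirror[OF assms, of 2 1] assms by simp
  also have "(track m [2..<m + 1] ^^ (m - 2)) (m - 1, (-1) ^ (m - 1)) =
      (m - 1 - (m - 2), (-1) ^ (m - 2) * (-1) ^ (m - 1))"
    by (rule track_segment_iterate_descend) (use assms in auto)
  also have "(-1 :: complex) ^ (m - 2) * (-1) ^ (m - 1) = (-1) ^ Suc (2 * (m - 2))"
    using assms by (simp add: power_add[symmetric])
  finally show ?thesis using assms by simp
qed

lemma track_wP_low:
  assumes "2 \<le> m" "1 \<le> j" "j \<le> m"
  shows "fst (track m (wP_word m) (j, 1)) = 2*m - 1 - j"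
proof -
  define f where "f = track m [2..<m + 1]"
  have wP: "track m (wP_word m) x = (f ^^ (m - 1)) x" for x
    unfolding wP_word_def track_concat_replicate f_def ..
  have split: "(f ^^ n) x = (f ^^ a) ((f ^^ b) x)" if "n = a + b" for n a b x
    using that by (simp add: funpow_add)
  consider (first) "j = 1" | (middle) "2 \<le> j" "j \<le> m - 1" | (last) "j = m"
    using assms by linarith
  then show ?thesis
  proof cases
    case first
    have "(f ^^ (m - 1)) (1, 1) = (f ^^ (m - 2)) ((f ^^ 1) (1, 1))"
      by (rule split) (use assms in simp)
    also have "(f ^^ 1) (1, 1) = (m, 1)" unfolding f_def using track_segment_below[OF assms(1), of 2 1] assms by simp
    also have "(f ^^ (m - 2)) (m, 1) = (m + (m - 2), 1)"
      unfolding f_def by (rule track_segment_iterate_ascend) (use assms in auto)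
    finally show ?thesis using first assms wP by simp
  next
    case middle
    have "(f ^^ (m - 1)) (j, 1) = (f ^^ (m - 1 - j)) (f ((f ^^ (j - 1)) (j, 1)))"
      using split[of "m - 1" "m - 1 - j" j] split[of j 1 "j - 1"] middle by simp
    also have "(f ^^ (j - 1)) (j, 1) = (1, (-1) ^ (j - 1))"
      unfolding f_def using track_segment_iterate_descend[OF assms(1), of 2 "j - 1" j 1] middle by simp
    also have "f (1, (-1) ^ (j - 1)) = (m, (-1) ^ (j - 1))"
      unfolding f_def using track_segment_below[OF assms(1), of 2] assms by simp
    also have "(f ^^ (m - 1 - j)) (m, (-1) ^ (j - 1)) = (m + (m - 1 - j), (-1) ^ (j - 1))"
      unfolding f_def by (rule track_segment_iterate_ascend) (use assms middle in auto)
    finally show ?thesis using middle assms wP by simp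
  next
    case last
    have "(f ^^ (m - 1)) (m, 1) = (f ^^ 1) ((f ^^ (m - 2)) (m, 1))"
      by (rule split) (use assms in simp)
    also have "(f ^^ (m - 2)) (m, 1) = (2*m - 2, 1)"
      unfolding f_def using track_segment_iterate_ascend[OF assms(1), of "m - 2" 1] assms by simp
    also have "(f ^^ 1) (2*m - 2, 1) = (m - 1, (-1) ^ (m - 1))"
      unfolding f_def using track_segment_mirror[OF assms(1), of 2 1] assms by simp
    finally show ?thesis using last assms wP by simp
  qed
qed

lemma track_w0_last:
  assumes "2 \<le> m"
  shows "fst (track m (w0_word m) (2*m - 1, 1)) = 0"
proof -
  define f where "f = track m [1..<m + 1]"
  have "m = Suc (m - 1)" using assms by simp
  then have "track m (w0_word m) (2*m - 1, 1) = (f ^^ (m - 1)) (f (2*m - 1, 1))"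
    unfolding w0_word_def track_concat_replicate f_def by (metis comp_apply funpow_Suc_right)
  also have "f (2*m - 1, 1) = (m - 1, (-1) ^ m)"
    unfolding f_def using track_segment_mirror[OF assms, of 1 1] assms by simp
  also have "(f ^^ (m - 1)) (m - 1, (-1) ^ m) = (m - 1 - (m - 1), (-1) ^ (m - 1) * (-1) ^ m)"
    unfolding f_def by (rule track_segment_iterate_descend) (use assms in auto)
  finally show ?thesis by simp
qed

section \<open>The lower unipotent element\<close>

definition lower_unitriangular :: "nat \<Rightarrow> 'a :: semiring_1 mat \<Rightarrow> bool" where
  "lower_unitriangular n M \<longleftrightarrow> M \<in> carrier_mat n n \<and>
     (\<forall>r<n. \<forall>c<n. r < c \<longrightarrow> M $$ (r, c) = 0) \<and> (\<forall>r<n. M $$ (r, r) = 1)"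

definition lower_band :: "nat \<Rightarrow> nat \<Rightarrow> 'a :: zero mat \<Rightarrow> bool" where
  "lower_band n k M \<longleftrightarrow> (\<forall>r<n. \<forall>c<n. c + k < r \<longrightarrow> M $$ (r, c) = 0)"

lemma lower_unitriangular_one: "lower_unitriangular n (1\<^sub>m n)"
  by (auto simp: lower_unitriangular_def)

lemma lower_band_one: "lower_band n 0 (1\<^sub>m n)"
  by (auto simp: lower_band_def)

lemma lower_unitriangular_mult:
  fixes A B :: "'a :: semiring_1 mat"
  assumes "lower_unitriangular n A" "lower_unitriangular n B"
  shows "lower_unitriangular n (A * B)"
proof -
  have A: "A \<in> carrier_mat n n" and B: "B \<in> carrier_mat n n"
    using assms by (auto simp: lower_unitriangular_def)
  have upper: "(A * B) $$ (r, c) = 0" if "r < n" "c < n" "r < c" for r c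
  proof -
    have "A $$ (r, k) * B $$ (k, c) = 0" if "k < n" for k
      using assms \<open>r < n\<close> \<open>c < n\<close> \<open>r < c\<close> that
      by (cases "r < k") (auto simp: lower_unitriangular_def)
    then show ?thesis unfolding index_mult_mat_sum[OF A B that(1,2)] by simp
  qed
  have diag: "(A * B) $$ (r, r) = 1" if "r < n" for r
  proof -
    have "A $$ (r, k) * B $$ (k, r) = 0" if "k < n" "k \<noteq> r" for k
      using assms \<open>r < n\<close> that by (cases "r < k") (auto simp: lower_unitriangular_def)
    then have "(A * B) $$ (r, r) = A $$ (r, r) * B $$ (r, r)"
      unfolding index_mult_mat_sum[OF A B that that] by (intro sum_lessThan_single[OF that])
    then show ?thesis using assms that by (simp add: lower_unitriangular_def)
  qed
  show ?thesis using A B upper diag by (auto simp: lower_unitriangular_def)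
qed

lemma index_mult_subdiag:
  fixes A B :: "'a :: semiring_1 mat"
  assumes "lower_unitriangular n A" "lower_unitriangular n B" "j + 1 < n"
  shows "(A * B) $$ (j + 1, j) = A $$ (j + 1, j) + B $$ (j + 1, j)"
proof -
  have A: "A \<in> carrier_mat n n" and B: "B \<in> carrier_mat n n"
    using assms by (auto simp: lower_unitriangular_def)
  have "(A * B) $$ (j + 1, j) = A $$ (j + 1, j) * B $$ (j, j) + A $$ (j + 1, j + 1) * B $$ (j + 1, j)"
    unfolding index_mult_mat_sum[OF A B assms(3) Suc_lessD[OF assms(3)[simplified]]]
  proof (intro sum_lessThan_two)
    fix k assume "k < n" "k \<noteq> j" "k \<noteq> j + 1"
    then show "A $$ (j + 1, k) * B $$ (k, j) = 0"
      using assms by (cases "j + 1 < k") (auto simp: lower_unitriangular_def)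
  qed (use assms in auto)
  then show ?thesis using assms by (simp add: lower_unitriangular_def)
qed

lemma lower_band_mult:
  fixes A B :: "'a :: semiring_0 mat"
  assumes "A \<in> carrier_mat n n" "B \<in> carrier_mat n n" "lower_band n k A" "lower_band n l B"
  shows "lower_band n (k + l) (A * B)"
  unfolding lower_band_def
proof (intro allI impI)
  fix r c assume rc: "r < n" "c < n" "c + (k + l) < r"
  have "A $$ (r, j) * B $$ (j, c) = 0" if "j < n" for j
    using assms rc that by (cases "j + k < r") (auto simp: lower_band_def)
  then show "(A * B) $$ (r, c) = 0"
    unfolding index_mult_mat_sum[OF assms(1,2) rc(1,2)] by simp
qed

lemma index_mult_lower_band_corner:
  fixes A B :: "'a :: semiring_0 mat"
  assumes "A \<in> carrier_mat n n" "B \<in> carrier_mat n n" "lower_band n k A" "lower_band n l B"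
    and "r < n" "c + k + l = r"
  shows "(A * B) $$ (r, c) = A $$ (r, r - k) * B $$ (r - k, c)"
proof -
  have "c < n" using assms by simp
  have "A $$ (r, j) * B $$ (j, c) = 0" if "j < n" "j \<noteq> r - k" for j
    using assms that by (cases "j + k < r") (auto simp: lower_band_def)
  then show ?thesis
    unfolding index_mult_mat_sum[OF assms(1,2,5) \<open>c < n\<close>] using assms by (intro sum_lessThan_single) auto
qed

lemma y_el_lower_unitriangular:
  "2 \<le> m \<Longrightarrow> 1 \<le> i \<Longrightarrow> i \<le> m \<Longrightarrow> lower_unitriangular (2*m) (y_el m i t)"
  by (auto simp: lower_unitriangular_def index_y_el y_el_carrier)

lemma y_el_lower_band:
  "2 \<le> m \<Longrightarrow> 1 \<le> i \<Longrightarrow> i \<le> m \<Longrightarrow> lower_band (2*m) 1 (y_el m i t)"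
  by (auto simp: lower_band_def index_y_el)

lemma y_el_subdiag:
  assumes "2 \<le> m" "1 \<le> i" "i \<le> m" "j \<le> m - 1"
  shows "y_el m i t $$ (j + 1, j) = (if j = i - 1 then t else 0)"
proof -
  have "j \<in> gen_rows m i \<longleftrightarrow> j = i - 1" using assms by (auto simp: gen_rows_def)
  then show ?thesis using index_y_el[OF assms(1-3), of "j + 1" j t] assms by simp
qed

definition ubar_left :: "nat \<Rightarrow> (nat \<Rightarrow> complex) \<Rightarrow> nat \<Rightarrow> complex mat \<Rightarrow> complex mat" where
  "ubar_left m a k T = foldr (\<lambda>i M. y_el m i (a i) * M) [k..<m] T"

definition ubar_right :: "nat \<Rightarrow> (nat \<Rightarrow> complex) \<Rightarrow> nat \<Rightarrow> complex mat" where
  "ubar_right m b k = foldr (\<lambda>i M. M * y_el m i (b i)) [k..<m] (1\<^sub>m (2*m))"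

lemma ubar_form_eq_left_right: "ubar_form m a c b = ubar_left m a 1 (y_el m m c * ubar_right m b 1)"
  by (simp add: ubar_form_def ubar_left_def ubar_right_def)

lemma ubar_right_structure:
  assumes "2 \<le> m" "1 \<le> k" "k \<le> m"
  shows "lower_unitriangular (2*m) (ubar_right m b k) \<and> lower_band (2*m) (m - k) (ubar_right m b k)
    \<and> (\<forall>j \<le> m - 1. ubar_right m b k $$ (j + 1, j) = (if k \<le> j + 1 \<and> j + 1 < m then b (j + 1) else 0))
    \<and> ubar_right m b k $$ (m - 1, k - 1) = (\<Prod>i = k..<m. b i)"
  using assms(3,2)
proof (induction k rule: inc_induct)
  case base
  show ?case using assms(1) lower_unitriangular_one lower_band_one by (auto simp: ubar_right_def)
next
  case (step k)
  have k: "1 \<le> k" "k \<le> m" using step by auto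
  note IH = step.IH[OF le_trans[OF step.prems le_SucI[OF order_refl]]]
  let ?A = "ubar_right m b (Suc k)" and ?Y = "y_el m k (b k)"
  note Y = y_el_lower_unitriangular[OF assms(1) k] y_el_lower_band[OF assms(1) k]
  have A: "?A \<in> carrier_mat (2*m) (2*m)" and Yc: "?Y \<in> carrier_mat (2*m) (2*m)"
    using IH y_el_carrier[OF assms(1) k] by (auto simp: lower_unitriangular_def)
  have eq: "ubar_right m b k = ?A * ?Y" using step by (simp add: ubar_right_def upt_conv_Cons)
  have band: "lower_band (2*m) (m - Suc k + 1) (?A * ?Y)"
    by (rule lower_band_mult[OF A Yc]) (use IH Y in auto)
  have sub: "ubar_right m b k $$ (j + 1, j) = (if k \<le> j + 1 \<and> j + 1 < m then b (j + 1) else 0)"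
    if "j \<le> m - 1" for j
  proof -
    have "ubar_right m b k $$ (j + 1, j) = ?A $$ (j + 1, j) + ?Y $$ (j + 1, j)"
      unfolding eq by (rule index_mult_subdiag) (use IH Y that assms in auto)
    then show ?thesis using IH that y_el_subdiag[OF assms(1) k that] step by auto
  qed
  have "ubar_right m b k $$ (m - 1, k - 1) = ?A $$ (m - 1, k) * ?Y $$ (k, k - 1)"
    using index_mult_lower_band_corner[OF A Yc, of "m - Suc k" 1 "m - 1" "k - 1"] IH Y step
    by (simp add: eq)
  also have "\<dots> = (\<Prod>i = Suc k..<m. b i) * b k"
    using IH y_el_subdiag[OF assms(1) k, of "k - 1" "b k"] k by simp
  also have "\<dots> = (\<Prod>i = k..<m. b i)"
    using step by (simp add: prod.atLeast_Suc_lessThan mult.commute)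
  finally show ?case using lower_unitriangular_mult[of "2*m" ?A ?Y] IH Y band sub step
    by (simp add: eq Suc_diff_Suc)
qed

lemma ubar_left_structure:
  assumes "2 \<le> m" "1 \<le> k" "k \<le> m" "lower_unitriangular (2*m) T" "lower_band (2*m) m T"
  shows "lower_unitriangular (2*m) (ubar_left m a k T) \<and> lower_band (2*m) (m - k + m) (ubar_left m a k T)
    \<and> (\<forall>j \<le> m - 1. ubar_left m a k T $$ (j + 1, j) =
         (if k \<le> j + 1 \<and> j + 1 < m then a (j + 1) else 0) + T $$ (j + 1, j))
    \<and> ubar_left m a k T $$ (2*m - k, 0) = (\<Prod>i = k..<m. a i) * T $$ (m, 0)"
  using assms(3,2)
proof (induction k rule: inc_induct)
  case base
  show ?case using assms by (auto simp: ubar_left_def)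
next
  case (step k)
  have k: "1 \<le> k" "k \<le> m" using step by auto
  note IH = step.IH[OF le_trans[OF step.prems le_SucI[OF order_refl]]]
  let ?A = "ubar_left m a (Suc k) T" and ?Y = "y_el m k (a k)"
  note Y = y_el_lower_unitriangular[OF assms(1) k] y_el_lower_band[OF assms(1) k]
  have A: "?A \<in> carrier_mat (2*m) (2*m)" and Yc: "?Y \<in> carrier_mat (2*m) (2*m)"
    using IH y_el_carrier[OF assms(1) k] by (auto simp: lower_unitriangular_def)
  have eq: "ubar_left m a k T = ?Y * ?A" using step by (simp add: ubar_left_def upt_conv_Cons)
  have band: "lower_band (2*m) (1 + (m - Suc k + m)) (?Y * ?A)"
    by (rule lower_band_mult[OF Yc A]) (use IH Y in auto)
  have sub: "ubar_left m a k T $$ (j + 1, j) = (if k \<le> j + 1 \<and> j + 1 < m then a (j + 1) else 0) + T $$ (j + 1, j)"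
    if "j \<le> m - 1" for j
  proof -
    have "ubar_left m a k T $$ (j + 1, j) = ?Y $$ (j + 1, j) + ?A $$ (j + 1, j)"
      unfolding eq by (rule index_mult_subdiag) (use IH Y that assms in auto)
    then show ?thesis using IH that y_el_subdiag[OF assms(1) k that] step by auto
  qed
  have "ubar_left m a k T $$ (2*m - k, 0) = ?Y $$ (2*m - k, 2*m - Suc k) * ?A $$ (2*m - Suc k, 0)"
    using index_mult_lower_band_corner[OF Yc A, of 1 "m - Suc k + m" "2*m - k" 0] IH Y step
    by (simp add: eq)
  also have "?Y $$ (2*m - k, 2*m - Suc k) = a k"
    using index_y_el[OF assms(1) k, of "2*m - k" "2*m - Suc k" "a k"] step by (simp add: gen_rows_def)
  also have "a k * ?A $$ (2*m - Suc k, 0) = (\<Prod>i = k..<m. a i) * T $$ (m, 0)"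
    using IH step by (simp add: prod.atLeast_Suc_lessThan)
  finally show ?case using lower_unitriangular_mult[of "2*m" ?Y ?A] IH Y band sub step
    by (simp add: eq Suc_diff_Suc)
qed

lemma ubar_middle_structure:
  fixes c :: complex and b :: "nat \<Rightarrow> complex"
  assumes "2 \<le> m"
  defines "T \<equiv> y_el m m c * ubar_right m b 1"
  shows "lower_unitriangular (2*m) T" "lower_band (2*m) m T"
    "\<And>j. j \<le> m - 1 \<Longrightarrow> T $$ (j + 1, j) = (if j = m - 1 then c else 0) + (if j + 1 < m then b (j + 1) else 0)"
    "T $$ (m, 0) = c * (\<Prod>i = 1..<m. b i)"
proof -
  have m: "1 \<le> m" "m \<le> m" using assms by auto
  note R = ubar_right_structure[OF assms(1) order_refl m(1), of b]
  note Y = y_el_lower_unitriangular[OF assms(1) m] y_el_lower_band[OF assms(1) m]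
  have Yc: "y_el m m c \<in> carrier_mat (2*m) (2*m)" and Rc: "ubar_right m b 1 \<in> carrier_mat (2*m) (2*m)"
    using y_el_carrier[OF assms(1) m] R by (auto simp: lower_unitriangular_def)
  show "lower_unitriangular (2*m) T" unfolding T_def using lower_unitriangular_mult R Y by blast
  show "lower_band (2*m) m T"
    using lower_band_mult[OF Yc Rc, of 1 "m - 1"] R Y assms by (simp add: T_def)
  show "T $$ (j + 1, j) = (if j = m - 1 then c else 0) + (if j + 1 < m then b (j + 1) else 0)"
    if "j \<le> m - 1" for j
    using index_mult_subdiag[of "2*m" "y_el m m c" "ubar_right m b 1" j] R Y that assms
      y_el_subdiag[OF assms(1) m that] by (simp add: T_def)
  have "T $$ (m, 0) = y_el m m c $$ (m, m - 1) * ubar_right m b 1 $$ (m - 1, 0)"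
    using index_mult_lower_band_corner[OF Yc Rc, of 1 "m - 1" m 0] R Y assms by (simp add: T_def)
  then show "T $$ (m, 0) = c * (\<Prod>i = 1..<m. b i)"
    using y_el_subdiag[OF assms(1) m, of "m - 1" c] R assms by simp
qed

lemma ubar_form_structure:
  assumes "2 \<le> m"
  shows "ubar_form m a c b \<in> carrier_mat (2*m) (2*m)"
    "\<And>j. j \<le> m - 1 \<Longrightarrow> ubar_form m a c b $$ (j + 1, j) = (if j + 1 < m then a (j + 1) + b (j + 1) else c)"
    "ubar_form m a c b $$ (2*m - 1, 0) = (\<Prod>i = 1..<m. a i) * c * (\<Prod>i = 1..<m. b i)"
proof -
  let ?T = "y_el m m c * ubar_right m b 1"
  note T = ubar_middle_structure[OF assms, where c = c and b = b]
  have "1 \<le> m" using assms by simp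
  note L = ubar_left_structure[where k = 1 and a = a, OF assms order_refl this T(1,2)]
  show "ubar_form m a c b \<in> carrier_mat (2*m) (2*m)"
    using L assms by (simp add: ubar_form_eq_left_right lower_unitriangular_def)
  show "ubar_form m a c b $$ (j + 1, j) = (if j + 1 < m then a (j + 1) + b (j + 1) else c)"
    if "j \<le> m - 1" for j
    using L T(3)[OF that] that assms by (auto simp: ubar_form_eq_left_right)
  show "ubar_form m a c b $$ (2*m - 1, 0) = (\<Prod>i = 1..<m. a i) * c * (\<Prod>i = 1..<m. b i)"
    using L T(4) assms by (simp add: ubar_form_eq_left_right)
qed

section \<open>The torus and the unipotent radicals\<close>

lemma index_Jmat:
  "i < 2*m \<Longrightarrow> j < 2*m \<Longrightarrow> Jmat m $$ (i, j) = (if i + j + 1 = 2*m then (-1) ^ (i + 1) else 0)"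
  by (simp add: Jmat_def)

lemma Jmat_carrier [simp]: "Jmat m \<in> carrier_mat (2*m) (2*m)"
  by (simp add: Jmat_def)

lemma UplusD:
  assumes "u \<in> Uplus m"
  shows "u \<in> carrier_mat (2*m) (2*m)" "transpose_mat u * Jmat m * u = Jmat m"
    "\<And>i j. i < 2*m \<Longrightarrow> j < i \<Longrightarrow> u $$ (i, j) = 0" "\<And>k. k < 2*m \<Longrightarrow> u $$ (k, k) = 1"
proof -
  show carrier: "u \<in> carrier_mat (2*m) (2*m)" and "transpose_mat u * Jmat m * u = Jmat m"
    using assms by (simp_all add: Uplus_def Bplus_def Sp_def)
  show "\<And>i j. i < 2*m \<Longrightarrow> j < i \<Longrightarrow> u $$ (i, j) = 0"
    using assms carrier by (auto simp: Uplus_def Bplus_def upper_triangular_def)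
  show "u $$ (k, k) = 1" if "k < 2*m" for k
  proof -
    have "\<forall>i\<in>{1..2*m}. ent u i i = 1" using assms by (simp add: Uplus_def)
    then have "ent u (k + 1) (k + 1) = 1" using that by simp
    then show ?thesis by (simp add: ent_def)
  qed
qed

lemma Uplus_superdiag_symmetric:
  assumes "2 \<le> m" "u \<in> Uplus m"
  shows "u $$ (0, 1) = u $$ (2*m - 2, 2*m - 1)"
proof -
  note U = UplusD[OF assms(2)]
  let ?n = "2*m" and ?J = "Jmat m"
  have Ut: "transpose_mat u \<in> carrier_mat ?n ?n" and UtJ: "transpose_mat u * ?J \<in> carrier_mat ?n ?n"
    using U(1) by auto
  have row: "(transpose_mat u * ?J) $$ (1, l) =
      (if l = ?n - 2 then 1 else 0) + (if l = ?n - 1 then - u $$ (0, 1) else 0)" if "l < ?n" for l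
  proof -
    have "(transpose_mat u * ?J) $$ (1, l) = 1 * ?J $$ (1, l) + u $$ (0, 1) * ?J $$ (0, l)"
      by (rule index_mult_two_term_row[OF Ut Jmat_carrier _ that])
        (use assms U(1,3,4) in \<open>auto simp: less_Suc_eq\<close>)
    then show ?thesis using assms that by (auto simp: index_Jmat)
  qed
  have "(transpose_mat u * ?J * u) $$ (1, ?n - 1) = 1 * u $$ (?n - 2, ?n - 1) + (- u $$ (0, 1)) * u $$ (?n - 1, ?n - 1)"
    by (rule index_mult_two_term_row[OF UtJ U(1)]) (use assms row in auto)
  moreover have "(transpose_mat u * ?J * u) $$ (1, ?n - 1) = 0"
    using U(2) assms by (simp add: index_Jmat)
  ultimately show ?thesis using U(4)[of "?n - 1"] assms by simp
qed

lemma index_diagonal_congruence: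
  fixes D J :: "'a :: comm_semiring_0 mat"
  assumes "D \<in> carrier_mat n n" "diagonal_mat D" "J \<in> carrier_mat n n" "i < n" "j < n"
  shows "(transpose_mat D * J * D) $$ (i, j) = D $$ (i, i) * J $$ (i, j) * D $$ (j, j)"
proof -
  have col: "D $$ (k, j) = (if k = j then D $$ (j, j) else 0)" if "k < n" for k
    by (rule diagonal_mat_col[OF assms(1,2,5) that])
  have row: "transpose_mat D $$ (i, k) = (if k = i then D $$ (i, i) else 0)" if "k < n" for k
    using assms that unfolding diagonal_mat_def by auto
  have "(transpose_mat D * J * D) $$ (i, j) = (transpose_mat D * J) $$ (i, j) * D $$ (j, j)"
    by (rule index_mult_single_col[OF _ assms(1,4,5,5) col]) (use assms in auto)
  also have "(transpose_mat D * J) $$ (i, j) = D $$ (i, i) * J $$ (i, j)"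
    by (rule index_mult_single_row[OF _ assms(3,4,5,4) row]) (use assms in auto)
  finally show ?thesis .
qed

lemma Sp_diagonal_mirror_product:
  assumes "d \<in> Sp m" "diagonal_mat d" "i < 2*m"
  shows "d $$ (i, i) * d $$ (2*m - 1 - i, 2*m - 1 - i) = 1"
proof -
  let ?j = "2*m - 1 - i"
  have "d \<in> carrier_mat (2*m) (2*m)" "transpose_mat d * Jmat m * d = Jmat m"
    using assms(1) by (auto simp: Sp_def)
  then have "Jmat m $$ (i, ?j) = d $$ (i, i) * Jmat m $$ (i, ?j) * d $$ (?j, ?j)"
    using index_diagonal_congruence[of d "2*m" "Jmat m" i ?j] assms by simp
  moreover have "Jmat m $$ (i, ?j) = (-1) ^ (i + 1)" using assms by (simp add: index_Jmat)
  ultimately show ?thesis by simp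
qed

lemma TWP_diag_step:
  assumes m: "2 \<le> m" and d: "d \<in> TWP m" and i: "2 \<le> i" "i \<le> m"
  shows "d $$ (i - 1, i - 1) = d $$ (i, i)"
proof -
  let ?n = "2*m" and ?s = "sdot m i"
  have dc: "d \<in> carrier_mat ?n ?n" and dd: "diagonal_mat d" and dS: "d \<in> Sp m"
    and comm: "peq (?s * d) (d * ?s)"
    using d i by (auto simp: TWP_def Torus_def Sp_def)
  have sc: "?s \<in> carrier_mat ?n ?n" using sdot_carrier[OF m _ i(2)] i by simp
  have s_row0: "?s $$ (0, k) = (if k = 0 then 1 else 0)" if "k < ?n" for k
    using index_sdot[OF m _ i(2) _ that] i m by (simp add: gen_rows_def swap_adjacent_def swap_sign_def)
  have s_entry: "?s $$ (i - 1, i) = 1"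
    using index_sdot[OF m _ i(2), of "i - 1" i] i by (simp add: gen_rows_def swap_adjacent_def swap_sign_def)
  have d0: "d $$ (0, 0) \<noteq> 0" using Sp_diagonal_mirror_product[OF dS dd, of 0] m by auto
  have sd: "(?s * d) $$ (r, c) = ?s $$ (r, c) * d $$ (c, c)" if "r < ?n" "c < ?n" for r c
    by (rule index_mult_single_col[OF sc dc that that(2) diagonal_mat_col[OF dc dd that(2)]])
  have ds: "(d * ?s) $$ (r, c) = d $$ (r, r) * ?s $$ (r, c)" if "r < ?n" "c < ?n" for r c
    by (rule index_mult_single_row[OF dc sc that that(1)]) (use dc dd that in \<open>auto simp: diagonal_mat_def\<close>)
  have "?s * d = d * ?s"
    by (rule peq_eq_of_index[OF comm, of "2*m" 0 0]) (use sd[of 0 0] ds[of 0 0] s_row0[of 0] m d0 sc dc in auto)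
  moreover have "(?s * d) $$ (i - 1, i) = d $$ (i, i)" "(d * ?s) $$ (i - 1, i) = d $$ (i - 1, i - 1)"
    using sd[of "i - 1" i] ds[of "i - 1" i] s_entry i by simp_all
  ultimately show ?thesis by simp
qed

lemma TWP_diag_const:
  assumes "2 \<le> m" "d \<in> TWP m" "1 \<le> i" "i \<le> m"
  shows "d $$ (i, i) = d $$ (1, 1)"
  using assms(3,4)
proof (induction i rule: dec_induct)
  case (step i)
  then show ?case using TWP_diag_step[OF assms(1,2), of "Suc i"] by simp
qed simp

lemma alpha1_TWP:
  assumes "2 \<le> m" "d \<in> TWP m"
  shows "alpha1 d = d $$ (0, 0) * d $$ (1, 1)"
proof -
  have dS: "d \<in> Sp m" and dd: "diagonal_mat d" using assms(2) by (auto simp: TWP_def Torus_def)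
  have "d $$ (m - 1, m - 1) * d $$ (m, m) = 1"
    using Sp_diagonal_mirror_product[OF dS dd, of "m - 1"] assms(1) by (simp add: Suc_diff_Suc)
  then have "d $$ (1, 1) * d $$ (1, 1) = 1"
    using TWP_diag_const[OF assms, of "m - 1"] TWP_diag_const[OF assms, of m] assms(1) by simp
  then have "inverse (d $$ (1, 1)) = d $$ (1, 1)" by (simp add: inverse_unique)
  then show ?thesis by (simp add: alpha1_def ent_def divide_inverse)
qed

text \<open>From \<open>u w_P = \<plusminus> w_P u'\<close> with \<open>u' \<in> U_+\<close>, the entry \<open>(r, r + 1)\<close> of \<open>u\<close> is, up to a
  sign, the entry \<open>(\<pi> r, \<pi> (r + 1))\<close> of \<open>u'\<close>, which lies below the diagonal.\<close>

lemma Uplus_wP_superdiag_zero: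
  assumes m: "2 \<le> m" and u: "u \<in> Uplus_wP m" and r: "1 \<le> r" "r \<le> m - 1"
  shows "u $$ (r, r + 1) = 0"
proof -
  let ?n = "2*m" and ?W = "wPdot m" and ?ws = "wP_word m"
  obtain u' where u': "u' \<in> Uplus m" "peq (u * ?W) (?W * u')"
    using u by (auto simp: Uplus_wP_def)
  have U: "u \<in> carrier_mat ?n ?n" using u by (auto simp: Uplus_wP_def dest: UplusD)
  note U' = UplusD[OF u'(1)]
  have W: "?W \<in> carrier_mat ?n ?n" using wPdot_carrier[OF m] .
  define \<pi> where "\<pi> k = fst (track m ?ws (k, 1))" for k
  have entry: "?W $$ (k, c) = (if c = \<pi> k then snd (track m ?ws (k, 1)) else 0)" if "k < ?n" "c < ?n" for k c
    unfolding wPdot_def \<pi>_def by (rule index_wdot[OF m valid_word_wP that])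
  have rlt: "r < ?n" "r + 1 < ?n" using r m by auto
  have \<pi>r: "\<pi> r = 2*m - 1 - r" "\<pi> (r + 1) = 2*m - 1 - (r + 1)"
    unfolding \<pi>_def using track_wP_low[OF m, of r] track_wP_low[OF m, of "r + 1"] r m by auto
  have \<pi>lt: "\<pi> (r + 1) < ?n" "\<pi> r < ?n" using \<pi>r m by auto
  have col: "?W $$ (k, \<pi> (r + 1)) = (if k = r + 1 then snd (track m ?ws (r + 1, 1)) else 0)"
    if "k < ?n" for k
  proof -
    have "\<pi> k = \<pi> (r + 1) \<Longrightarrow> k = r + 1"
      unfolding \<pi>_def by (rule track_injective[OF m valid_word_wP that rlt(2)])
    then show ?thesis using entry[OF that \<pi>lt(1)] by auto
  qed
  have "(u * ?W) $$ (r, \<pi> (r + 1)) = u $$ (r, r + 1) * snd (track m ?ws (r + 1, 1))"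
    by (rule index_mult_single_col[OF U W rlt(1) \<pi>lt(1) rlt(2) col])
  moreover have "(?W * u') $$ (r, \<pi> (r + 1)) = snd (track m ?ws (r, 1)) * u' $$ (\<pi> r, \<pi> (r + 1))"
    by (rule index_mult_single_row[OF W U'(1) rlt(1) \<pi>lt(1) \<pi>lt(2)]) (use entry rlt in auto)
  moreover have "u' $$ (\<pi> r, \<pi> (r + 1)) = 0" using U'(3)[OF \<pi>lt(2)] \<pi>r r m by simp
  moreover have "?W * u' \<in> carrier_mat ?n ?n" using W U'(1) by simp
  ultimately have "u $$ (r, r + 1) * snd (track m ?ws (r + 1, 1)) = 0"
    using peq_index_eq_zero[OF u'(2) _ rlt(1) \<pi>lt(1)] by simp
  then show ?thesis using track_sign_nonzero[of m ?ws "r + 1"] by simp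
qed

section \<open>The superpotential\<close>

lemma Bminus_w0dot_entry_below_corner:
  assumes m: "2 \<le> m" and b: "b \<in> Bminus m"
  shows "(b * w0dot m) $$ (2*m - 2, 0) = 0"
proof -
  let ?n = "2*m" and ?s = "snd (track m (w0_word m) (2*m - 1, 1))"
  have bc: "b \<in> carrier_mat ?n ?n" using b by (simp add: Bminus_def Sp_def)
  have col: "w0dot m $$ (k, 0) = (if k = ?n - 1 then ?s else 0)" if "k < ?n" for k
  proof -
    have "fst (track m (w0_word m) (k, 1)) = 0 \<longleftrightarrow> k = ?n - 1"
      using track_injective[OF m valid_word_w0 that, of "?n - 1"] track_w0_last[OF m] m by auto
    then show ?thesis
      using index_wdot[OF m valid_word_w0 that, of 0] m unfolding w0dot_def by simp
  qed
  have "(b * w0dot m) $$ (?n - 2, 0) = b $$ (?n - 2, ?n - 1) * ?s"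
    by (rule index_mult_single_col[OF bc w0dot_carrier[OF m] _ _ _ col]) (use m in auto)
  moreover have "b $$ (?n - 2, ?n - 1) = 0"
    using b bc m by (auto simp: Bminus_def lower_triangular_def upper_triangular_def)
  ultimately show ?thesis by simp
qed

lemma Zd_entry_below_corner:
  assumes "2 \<le> m" "z \<in> Zd m d"
  shows "z $$ (2*m - 2, 0) = 0"
proof -
  obtain b where b: "b \<in> Bminus m" "peq z (b * w0dot m)" using assms(2) by (auto simp: Zd_def)
  have "b \<in> carrier_mat (2*m) (2*m)" using b(1) by (simp add: Bminus_def Sp_def)
  then have "b * w0dot m \<in> carrier_mat (2*m) (2*m)"
    using w0dot_carrier[OF assms(1)] by simp
  then show ?thesis
    using peq_index_eq_zero[OF b(2)] Bminus_w0dot_entry_below_corner[OF assms(1) b(1)] assms(1) by simp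
qed

lemma decomposition_entry_below_corner:
  assumes m: "2 \<le> m" and u1: "u1 \<in> Uplus m"
    and d: "d \<in> carrier_mat (2*m) (2*m)" "diagonal_mat d" and u2: "u2 \<in> carrier_mat (2*m) (2*m)"
  shows "(u1 * wPdot m * d * u2) $$ (2*m - 2, 0) =
    u1 $$ (2*m - 2, 2*m - 1) * d $$ (2*m - 1, 2*m - 1) * u2 $$ (2*m - 1, 0) - d $$ (1, 1) * u2 $$ (1, 0)"
proof -
  let ?n = "2*m" and ?W = "wPdot m"
  note U = UplusD[OF u1]
  have W: "?W \<in> carrier_mat ?n ?n" using wPdot_carrier[OF m] .
  have du2: "d * u2 \<in> carrier_mat ?n ?n" and H: "?W * (d * u2) \<in> carrier_mat ?n ?n"
    using d u2 W by auto
  have lt: "?n - 2 < ?n" "?n - 1 < ?n" "0 < ?n" "1 < ?n" using m by auto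
  have "u1 * ?W * d * u2 = u1 * (?W * (d * u2))"
    using U(1) W d u2 by (simp add: assoc_mult_mat[of _ ?n ?n _ ?n _ ?n])
  also have "\<dots> $$ (?n - 2, 0) = 1 * (?W * (d * u2)) $$ (?n - 2, 0)
      + u1 $$ (?n - 2, ?n - 1) * (?W * (d * u2)) $$ (?n - 1, 0)"
    by (rule index_mult_two_term_row[OF U(1) H lt(1,3,1,2)])
      (use U(3,4) m in \<open>auto simp: less_Suc_eq linorder_neq_iff\<close>)
  also have "(?W * (d * u2)) $$ (?n - 2, 0) = -1 * (d * u2) $$ (1, 0)"
    by (rule index_mult_single_row[OF W du2 lt(1,3,4)])
      (use index_wdot[OF m valid_word_wP lt(1)] track_wP_penultimate[OF m] in \<open>simp add: wPdot_def\<close>)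
  also have "(?W * (d * u2)) $$ (?n - 1, 0) = 1 * (d * u2) $$ (?n - 1, 0)"
    by (rule index_mult_single_row[OF W du2 lt(2,3,2)])
      (use index_wdot[OF m valid_word_wP lt(2)] track_wP_last[OF m, of 1] in \<open>simp add: wPdot_def\<close>)
  also have "(d * u2) $$ (1, 0) = d $$ (1, 1) * u2 $$ (1, 0)"
    by (rule index_mult_single_row[OF d(1) u2 lt(4,3,4)]) (use d lt in \<open>auto simp: diagonal_mat_def\<close>)
  also have "(d * u2) $$ (?n - 1, 0) = d $$ (?n - 1, ?n - 1) * u2 $$ (?n - 1, 0)"
    by (rule index_mult_single_row[OF d(1) u2 lt(2,3,2)]) (use d lt in \<open>auto simp: diagonal_mat_def\<close>)
  finally show ?thesis by simp
qed

lemma superpot_ubar_form: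
  assumes m: "2 \<le> m" and u1: "u1 \<in> Uplus_wP m"
  shows "superpot m u1 (ubar_form m a c b) =
    u1 $$ (0, 1) + (\<Sum>i = 1..<m. a i) + c + (\<Sum>i = 1..<m. b i)"
proof -
  have "(\<Sum>i = 2..m. ent u1 i (i + 1)) = 0"
  proof (intro sum.neutral ballI)
    fix i assume "i \<in> {2..m}"
    then show "ent u1 i (i + 1) = 0"
      using Uplus_wP_superdiag_zero[OF m u1, of "i - 1"] by (auto simp: ent_def)
  qed
  then have e: "(\<Sum>i = 1..m. ent u1 i (i + 1)) = u1 $$ (0, 1)"
    using m by (simp add: sum.atLeast_Suc_atMost numeral_2_eq_2 ent_def)
  have f: "ent (ubar_form m a c b) (i + 1) i = (if i < m then a i + b i else c)" if "1 \<le> i" "i \<le> m" for i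
    using ubar_form_structure(2)[OF m, of "i - 1" a c b] that by (simp add: ent_def)
  have "(\<Sum>i = 1..m. ent (ubar_form m a c b) (i + 1) i) = (\<Sum>i = 1..<Suc m. ent (ubar_form m a c b) (i + 1) i)"
    by (simp add: atLeastLessThanSuc_atLeastAtMost)
  also have "\<dots> = (\<Sum>i = 1..<m. ent (ubar_form m a c b) (i + 1) i) + ent (ubar_form m a c b) (m + 1) m"
    using m by simp
  also have "(\<Sum>i = 1..<m. ent (ubar_form m a c b) (i + 1) i) = (\<Sum>i = 1..<m. a i + b i)"
    using f by (intro sum.cong) auto
  also have "ent (ubar_form m a c b) (m + 1) m = c"
    using f[of m] m by simp
  finally show ?thesis unfolding superpot_def e by (simp add: sum.distrib)
qed

theorem mainTheorem6:
  fixes m :: nat and d z u1 u2 :: "complex mat" and a b :: "nat \<Rightarrow> complex" and c :: complex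
  assumes "m \<ge> 2"
    and "d \<in> TWP m"
    and "z \<in> Zd m d"
    and "u1 \<in> Uplus_wP m"
    and "u2 \<in> Uminus m"
    and "peq z (u1 * wPdot m * d * u2)"
    and "u2 = ubar_form m a c b"
    and "\<forall>i\<in>{1..<m}. a i \<noteq> 0 \<and> b i \<noteq> 0"
    and "c \<noteq> 0"
  shows "superpot m u1 u2 =
           (\<Sum>i=1..<m. a i) + c + (\<Sum>i=1..<m. b i)
           + alpha1 d * (a 1 + b 1) / ((\<Prod>i=1..<m. a i) * c * (\<Prod>i=1..<m. b i))"
proof -
  let ?n = "2*m" and ?P = "(\<Prod>i=1..<m. a i) * c * (\<Prod>i=1..<m. b i)"
  have d: "d \<in> carrier_mat ?n ?n" "diagonal_mat d" "d \<in> Sp m"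
    using assms(2) by (auto simp: TWP_def Torus_def Sp_def)
  have u1: "u1 \<in> Uplus m" using assms(4) by (simp add: Uplus_wP_def)
  note u2 = ubar_form_structure[OF assms(1), where a = a and c = c and b = b, folded assms(7)]
  define t where "t = u1 $$ (0, 1)"
  have "z \<in> carrier_mat ?n ?n" using assms(3) by (simp add: Zd_def Sp_def)
  then have "(u1 * wPdot m * d * u2) $$ (?n - 2, 0) = 0"
    using peq_index_eq_zero[OF peq_sym[OF assms(6)]] Zd_entry_below_corner[OF assms(1,3)] assms(1) by simp
  moreover have "u1 $$ (?n - 2, ?n - 1) = t"
    using Uplus_superdiag_symmetric[OF assms(1) u1] by (simp add: t_def)
  moreover have "u2 $$ (1, 0) = a 1 + b 1" using u2(2)[of 0] assms(1) by simp
  ultimately have "t * d $$ (?n - 1, ?n - 1) * ?P = d $$ (1, 1) * (a 1 + b 1)"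
    using decomposition_entry_below_corner[OF assms(1) u1 d(1,2) u2(1)] u2(3) by simp
  then have "t * ?P * (d $$ (0, 0) * d $$ (?n - 1, ?n - 1)) = d $$ (0, 0) * d $$ (1, 1) * (a 1 + b 1)"
    by (simp only: ac_simps)
  moreover have "d $$ (0, 0) * d $$ (?n - 1, ?n - 1) = 1"
    using Sp_diagonal_mirror_product[OF d(3,2), of 0] assms(1) by simp
  ultimately have "t * ?P = alpha1 d * (a 1 + b 1)"
    unfolding alpha1_TWP[OF assms(1,2)] by (metis mult_1_right)
  moreover have "?P \<noteq> 0" using assms(8,9) by auto
  ultimately have "t = alpha1 d * (a 1 + b 1) / ?P" by (simp add: eq_divide_eq)
  then show ?thesis
    using superpot_ubar_form[OF assms(1,4)] assms(7) by (simp add: t_def)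
qed

end
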